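(* Let $G$ be a graph with girth at least $5$ (in particular, any forest). Then $\gamma^{SLD}(G)=\gamma_2(G)$.
   Context: All graphs are finite, simple and undirected (not necessarily connected). For $u\in V$, $N(u)$ is the set of neighbours of $u$ and $N[u]=N(u)\cup\{u\}$. A code is a non-empty subset $C\subseteq V$; $I(C;u)=N[u]\cap C$. A code $C$ is self-locating-dominating if for every $u\in V\setminus C$ we have $I(C;u)\neq\emptyset$ and $\bigcap_{c\in I(C;u)}N[c]=\{u\}$; $\gamma^{SLD}(G)$ is the minimum size of such a code. A set $S\subseteq V$ is $2$-dominating if $|N[u]\cap S|\ge 2$ for every $u\in V\setminus S$; $\gamma_2(G)$ is the minimum size of a $2$-dominating set. The girth is the length of a shortest cycle; acyclic graphs have infinite girth. *)

theory Defs
  imports Main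
begin

definition simple_graph :: "'a set \<Rightarrow> ('a \<Rightarrow> 'a \<Rightarrow> bool) \<Rightarrow> bool" where
  "simple_graph V E \<longleftrightarrow> finite V \<and> (\<forall>u v. E u v \<longrightarrow> u \<in> V \<and> v \<in> V)
     \<and> (\<forall>u v. E u v \<longrightarrow> E v u) \<and> (\<forall>u. \<not> E u u)"

definition nbh :: "'a set \<Rightarrow> ('a \<Rightarrow> 'a \<Rightarrow> bool) \<Rightarrow> 'a \<Rightarrow> 'a set" where
  "nbh V E u = {v \<in> V. E u v}"

definition cnbh :: "'a set \<Rightarrow> ('a \<Rightarrow> 'a \<Rightarrow> bool) \<Rightarrow> 'a \<Rightarrow> 'a set" where
  "cnbh V E u = insert u (nbh V E u)"

definition I_set :: "'a set \<Rightarrow> ('a \<Rightarrow> 'a \<Rightarrow> bool) \<Rightarrow> 'a set \<Rightarrow> 'a \<Rightarrow> 'a set" where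
  "I_set V E C u = cnbh V E u \<inter> C"

definition is_SLD_code :: "'a set \<Rightarrow> ('a \<Rightarrow> 'a \<Rightarrow> bool) \<Rightarrow> 'a set \<Rightarrow> bool" where
  "is_SLD_code V E C \<longleftrightarrow> C \<subseteq> V \<and> C \<noteq> {} \<and>
     (\<forall>u \<in> V - C. I_set V E C u \<noteq> {} \<and> (\<Inter>c \<in> I_set V E C u. cnbh V E c) = {u})"

definition gamma_SLD :: "'a set \<Rightarrow> ('a \<Rightarrow> 'a \<Rightarrow> bool) \<Rightarrow> nat" where
  "gamma_SLD V E = Min {card C | C. is_SLD_code V E C}"

definition is_2dom :: "'a set \<Rightarrow> ('a \<Rightarrow> 'a \<Rightarrow> bool) \<Rightarrow> 'a set \<Rightarrow> bool" where
  "is_2dom V E S \<longleftrightarrow> S \<subseteq> V \<and> (\<forall>u \<in> V - S. card (cnbh V E u \<inter> S) \<ge> 2)"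

definition gamma_2 :: "'a set \<Rightarrow> ('a \<Rightarrow> 'a \<Rightarrow> bool) \<Rightarrow> nat" where
  "gamma_2 V E = Min {card S | S. is_2dom V E S}"

definition is_cycle :: "'a set \<Rightarrow> ('a \<Rightarrow> 'a \<Rightarrow> bool) \<Rightarrow> 'a list \<Rightarrow> bool" where
  "is_cycle V E xs \<longleftrightarrow> length xs \<ge> 3 \<and> distinct xs \<and> set xs \<subseteq> V \<and>
     (\<forall>i < length xs. E (xs ! i) (xs ! ((i + 1) mod length xs)))"

text \<open>Girth at least g (acyclic graphs have infinite girth, so they qualify).\<close>
definition girth_at_least :: "'a set \<Rightarrow> ('a \<Rightarrow> 'a \<Rightarrow> bool) \<Rightarrow> nat \<Rightarrow> bool" where
  "girth_at_least V E g \<longleftrightarrow> (\<forall>xs. is_cycle V E xs \<longrightarrow> length xs \<ge> g)"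

end

theory Submission
  imports Defs
begin

text \<open>An SLD code is always 2-dominating: if a vertex u outside C had a single code
  neighbour c, then the intersection of the closed neighbourhoods over I(C;u) would be
  N[c], which contains c \<noteq> u. Conversely, in girth at least 5 two distinct neighbours of
  u have no common closed neighbour other than u (a second one would close a triangle or
  a 4-cycle), so two code neighbours already pin down u.\<close>

lemma girth_at_least_mono:
  "girth_at_least V E g \<Longrightarrow> h \<le> g \<Longrightarrow> girth_at_least V E h"
  unfolding girth_at_least_def by (meson order_trans)

lemma simple_graphD:
  assumes "simple_graph V E"
  shows "finite V" "E u v \<Longrightarrow> u \<in> V" "E u v \<Longrightarrow> E v u" "\<not> E u u"
  using assms by (simp_all add: simple_graph_def)

lemma all_less_3: "(\<forall>i < (3::nat). P i) \<longleftrightarrow> P 0 \<and> P 1 \<and> P 2"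
  by (auto simp: less_Suc_eq numeral_eq_Suc)

lemma all_less_4: "(\<forall>i < (4::nat). P i) \<longleftrightarrow> P 0 \<and> P 1 \<and> P 2 \<and> P 3"
  by (auto simp: less_Suc_eq numeral_eq_Suc)

lemma girth_at_least_4_no_triangle:
  assumes G: "simple_graph V E" and "girth_at_least V E 4"
    and "E a b" "E b c" "E c a"
  shows False
proof -
  have "\<forall>i < 3. E ([a, b, c] ! i) ([a, b, c] ! ((i + 1) mod 3))"
    using assms(3-) unfolding all_less_3 by simp
  moreover have "distinct [a, b, c]" "set [a, b, c] \<subseteq> V"
    using assms(3-) simple_graphD(2,4)[OF G] by auto
  ultimately have "is_cycle V E [a, b, c]" by (simp add: is_cycle_def)
  then show False
    using assms(2) unfolding girth_at_least_def by fastforce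
qed

lemma girth_at_least_5_no_square:
  assumes G: "simple_graph V E" and "girth_at_least V E 5"
    and "E a b" "E b c" "E c d" "E d a" and "a \<noteq> c" "b \<noteq> d"
  shows False
proof -
  have "\<forall>i < 4. E ([a, b, c, d] ! i) ([a, b, c, d] ! ((i + 1) mod 4))"
    using assms(3-6) unfolding all_less_4 by simp
  moreover have "distinct [a, b, c, d]" "set [a, b, c, d] \<subseteq> V"
    using assms(3-) simple_graphD(2,4)[OF G] by auto
  ultimately have "is_cycle V E [a, b, c, d]" by (simp add: is_cycle_def)
  then show False
    using assms(2) unfolding girth_at_least_def by fastforce
qed

lemma girth_at_least_5_cnbh_Int:
  assumes G: "simple_graph V E" and girth: "girth_at_least V E 5"
    and "u \<in> V" "E u c\<^sub>1" "E u c\<^sub>2" "c\<^sub>1 \<noteq> c\<^sub>2"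
  shows "cnbh V E c\<^sub>1 \<inter> cnbh V E c\<^sub>2 = {u}"
proof -
  note sym = simple_graphD(3)[OF G]
  have no_triangle: "\<And>a b c. E a b \<Longrightarrow> E b c \<Longrightarrow> E c a \<Longrightarrow> False"
    using girth_at_least_4_no_triangle[OF G girth_at_least_mono[OF girth]] by simp
  have "w = u" if w: "w \<in> cnbh V E c\<^sub>1" "w \<in> cnbh V E c\<^sub>2" for w
  proof (rule ccontr)
    assume "w \<noteq> u"
    consider "w = c\<^sub>1" | "w = c\<^sub>2" | "w \<noteq> c\<^sub>1" "w \<noteq> c\<^sub>2" "E c\<^sub>1 w" "E c\<^sub>2 w"
      using w by (auto simp: cnbh_def nbh_def)
    then show False
    proof cases
      case 1
      with w(2) \<open>c\<^sub>1 \<noteq> c\<^sub>2\<close> have "E c\<^sub>2 c\<^sub>1" by (simp add: cnbh_def nbh_def)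
      then show False using no_triangle[OF \<open>E u c\<^sub>1\<close> sym sym[OF \<open>E u c\<^sub>2\<close>]] by blast
    next
      case 2
      with w(1) \<open>c\<^sub>1 \<noteq> c\<^sub>2\<close> have "E c\<^sub>1 c\<^sub>2" by (simp add: cnbh_def nbh_def)
      then show False using no_triangle[OF \<open>E u c\<^sub>1\<close> _ sym[OF \<open>E u c\<^sub>2\<close>]] by blast
    next
      case 3
      then show False
        using girth_at_least_5_no_square[OF G girth \<open>E u c\<^sub>1\<close> \<open>E c\<^sub>1 w\<close> sym[OF \<open>E c\<^sub>2 w\<close>]
            sym[OF \<open>E u c\<^sub>2\<close>]] \<open>w \<noteq> u\<close> \<open>c\<^sub>1 \<noteq> c\<^sub>2\<close> by blast
    qed
  qed
  moreover have "u \<in> cnbh V E c\<^sub>1 \<inter> cnbh V E c\<^sub>2"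
    using assms(3-5) sym[OF \<open>E u c\<^sub>1\<close>] sym[OF \<open>E u c\<^sub>2\<close>] by (simp add: cnbh_def nbh_def)
  ultimately show ?thesis by blast
qed

lemma SLD_code_imp_2dom:
  assumes "finite V" and "is_SLD_code V E C"
  shows "is_2dom V E C"
  unfolding is_2dom_def
proof (intro conjI ballI)
  show "C \<subseteq> V" using assms(2) by (simp add: is_SLD_code_def)
  fix u assume u: "u \<in> V - C"
  have I_ne: "I_set V E C u \<noteq> {}" and I_locates: "(\<Inter>c \<in> I_set V E C u. cnbh V E c) = {u}"
    using assms(2) u by (auto simp: is_SLD_code_def)
  obtain c where c: "c \<in> I_set V E C u" using I_ne by blast
  have "I_set V E C u \<noteq> {c}"
  proof
    assume "I_set V E C u = {c}"
    with I_locates have "c = u" by (auto simp: cnbh_def)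
    with c u show False by (simp add: I_set_def)
  qed
  then obtain d where d: "d \<in> I_set V E C u" "d \<noteq> c" using c by blast
  have "finite (cnbh V E u \<inter> C)" using assms(1) by (simp add: cnbh_def nbh_def)
  moreover have "{c, d} \<subseteq> cnbh V E u \<inter> C" using c d by (simp add: I_set_def)
  ultimately have "card {c, d} \<le> card (cnbh V E u \<inter> C)" by (rule card_mono)
  then show "2 \<le> card (cnbh V E u \<inter> C)" using d by simp
qed

lemma girth_at_least_5_2dom_imp_SLD_code:
  assumes G: "simple_graph V E" and "V \<noteq> {}" and girth: "girth_at_least V E 5"
    and dom: "is_2dom V E C"
  shows "is_SLD_code V E C"
  unfolding is_SLD_code_def
proof (intro conjI ballI)
  show "C \<subseteq> V" using dom by (simp add: is_2dom_def)
  show "C \<noteq> {}" using dom \<open>V \<noteq> {}\<close> by (auto simp: is_2dom_def)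
next
  fix u assume u: "u \<in> V - C"
  have "2 \<le> card (cnbh V E u \<inter> C)" using dom u by (simp add: is_2dom_def)
  then obtain c\<^sub>1 c\<^sub>2 where c: "c\<^sub>1 \<in> cnbh V E u \<inter> C" "c\<^sub>2 \<in> cnbh V E u \<inter> C" "c\<^sub>1 \<noteq> c\<^sub>2"
    by (auto simp: numeral_2_eq_2 card_le_Suc_iff)
  have "E u c\<^sub>1" "E u c\<^sub>2" using c u by (auto simp: cnbh_def nbh_def)
  then have "cnbh V E c\<^sub>1 \<inter> cnbh V E c\<^sub>2 = {u}"
    using girth_at_least_5_cnbh_Int[OF G girth] u c(3) by blast
  moreover have "u \<in> cnbh V E c" if "c \<in> I_set V E C u" for c
    using that u by (auto simp: I_set_def cnbh_def nbh_def dest: simple_graphD(3)[OF G])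
  ultimately show "(\<Inter>c \<in> I_set V E C u. cnbh V E c) = {u}"
    using c by (auto simp: I_set_def)
  show "I_set V E C u \<noteq> {}" using c by (auto simp: I_set_def)
qed

theorem mainTheorem11:
  fixes V :: "'a set" and E :: "'a \<Rightarrow> 'a \<Rightarrow> bool"
  assumes "simple_graph V E"
    and "V \<noteq> {}"
    and "girth_at_least V E 5"
  shows "gamma_SLD V E = gamma_2 V E"
proof -
  have "is_SLD_code V E C \<longleftrightarrow> is_2dom V E C" for C
    using SLD_code_imp_2dom[OF simple_graphD(1)[OF assms(1)]]
      girth_at_least_5_2dom_imp_SLD_code[OF assms] by blast
  then show ?thesis unfolding gamma_SLD_def gamma_2_def by simp
qed

end
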